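(* Let $p$ be an odd prime. Then $$\sum_{k=0}^{\frac{p-1}2}\frac{k^2\binom{2k}k^2}{32^k}\equiv\begin{cases}(-1)^{\frac{p+3}4}2^{-\frac{p-1}2}\dfrac{(\frac{p+3}2)!}{(\frac{p-5}4)!\,(\frac{p+3}4)!}\pmod{p^2}&\text{if }p\equiv1\pmod 4,\\ (-1)^{\frac{p+1}4}2^{-\frac{p-1}2}\dfrac{(\frac{p+1}2)!}{(\frac{p-3}4)!\,(\frac{p+1}4)!}\pmod{p^2}&\text{if }p\equiv3\pmod4.\end{cases}$$
   Context: Congruences are between rational numbers whose denominators are prime to $p$. *)

theory Defs
  imports "HOL-Number_Theory.Number_Theory"
begin

definition p_integral :: "nat \<Rightarrow> rat \<Rightarrow> bool" where
  "p_integral p x \<longleftrightarrow> coprime (snd (quotient_of x)) (int p)"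

definition rat_cong :: "nat \<Rightarrow> rat \<Rightarrow> rat \<Rightarrow> int \<Rightarrow> bool" where
  "rat_cong p a b m \<longleftrightarrow> p_integral p ((a - b) / of_int m)"

end

theory Submission
  imports Defs
begin

text \<open>
  Put \<open>A(x, k) = (x + k choose 2k) (2k choose k)\<close>, a polynomial in \<open>x\<close>. Its factorisation
  \<open>(-1)^k A(x, k) = \<Prod>j<k. ((2j + 1)\<^sup>2 - (2x + 1)\<^sup>2) / (4 (j + 1)\<^sup>2)\<close> shows that for
  \<open>p = 2n + 1\<close> the numbers \<open>(-1)^k A(n, k)\<close> and \<open>(2k choose k)\<^sup>2 / 16^k\<close> agree modulo \<open>p\<^sup>2\<close>
  for \<open>k \<le> n\<close>. So the sum is congruent to the terminating sum
  \<open>M\<^sub>2(n) = \<Sum>k\<le>n. k\<^sup>2 A(n, k) (-1/2)^k\<close>, which is evaluated exactly: the moments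
  \<open>M\<^sub>i(n) = \<Sum>k\<le>n. k^i A(n, k) (-1/2)^k\<close> satisfy, by contiguous relations of \<open>A\<close> and telescoping,
  \<open>(n + 2) M\<^sub>0(n + 2) + (n + 1) M\<^sub>0(n) = 0\<close>, \<open>M\<^sub>1(n + 2) - M\<^sub>1(n) = -(2n + 3) M\<^sub>0(n + 1)\<close> and
  \<open>M\<^sub>2(n) = M\<^sub>1(n) - n (n + 1) M\<^sub>0(n)\<close>. Hence \<open>M\<^sub>0(2m) = (-1)^m (2m choose m) / 4^m\<close>,
  \<open>M\<^sub>0(2m + 1) = M\<^sub>1(2m) = 0\<close>, and \<open>M\<^sub>2\<close> is the stated factorial expression.
\<close>

section \<open>p-integral rationals\<close>

lemma p_integral_iff:
  "p_integral p x \<longleftrightarrow> (\<exists>a b. b \<noteq> 0 \<and> coprime b (int p) \<and> x = of_int a / of_int b)"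
proof
  assume "p_integral p x"
  moreover obtain a b where q: "quotient_of x = (a, b)" by fastforce
  ultimately show "\<exists>a b. b \<noteq> 0 \<and> coprime b (int p) \<and> x = of_int a / of_int b"
    using quotient_of_denom_pos[OF q] quotient_of_div[OF q] unfolding p_integral_def q
    by (intro exI[of _ a] exI[of _ b]) auto
next
  assume "\<exists>a b. b \<noteq> 0 \<and> coprime b (int p) \<and> x = of_int a / of_int b"
  then obtain a b where b: "b \<noteq> 0" "coprime b (int p)" and x: "x = of_int a / of_int b"
    by blast
  obtain a' b' where q: "quotient_of x = (a', b')" by fastforce
  have "a' * b = a * b'"
    using quotient_of_div[OF q] quotient_of_denom_pos[OF q] b(1) x
    by (simp add: field_simps flip: of_int_mult)
  then have "b' dvd b"
    using quotient_of_coprime[OF q]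
    by (metis coprime_commute coprime_dvd_mult_right_iff dvd_triv_right)
  then have "coprime b' (int p)"
    using coprime_divisors[OF _ dvd_refl b(2)] by blast
  then show "p_integral p x"
    unfolding p_integral_def q by simp
qed

lemma p_integral_of_int [simp]: "p_integral p (of_int a)"
  unfolding p_integral_iff by (rule exI[of _ a], rule exI[of _ 1]) simp

lemma p_integral_0 [simp]: "p_integral p 0"
  using p_integral_of_int[of p 0] by simp

lemma p_integral_1 [simp]: "p_integral p 1"
  using p_integral_of_int[of p 1] by simp

lemma p_integral_of_nat [simp]: "p_integral p (of_nat a)"
  using p_integral_of_int[of p "int a"] by simp

lemma p_integral_mult:
  assumes "p_integral p x" "p_integral p y"
  shows "p_integral p (x * y)"
proof -
  obtain a b c d where "b \<noteq> 0" "coprime b (int p)" "x = of_int a / of_int b"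
    and "d \<noteq> 0" "coprime d (int p)" "y = of_int c / of_int d"
    using assms unfolding p_integral_iff by blast
  then show ?thesis
    unfolding p_integral_iff by (intro exI[of _ "a * c"] exI[of _ "b * d"]) simp
qed

lemma p_integral_add:
  assumes "p_integral p x" "p_integral p y"
  shows "p_integral p (x + y)"
proof -
  obtain a b c d where "b \<noteq> 0" "coprime b (int p)" "x = of_int a / of_int b"
    and "d \<noteq> 0" "coprime d (int p)" "y = of_int c / of_int d"
    using assms unfolding p_integral_iff by blast
  then show ?thesis
    unfolding p_integral_iff
    by (intro exI[of _ "a * d + c * b"] exI[of _ "b * d"]) (simp add: field_simps)
qed

lemma p_integral_sum: "(\<And>i. i \<in> A \<Longrightarrow> p_integral p (f i)) \<Longrightarrow> p_integral p (sum f A)"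
  by (induction A rule: infinite_finite_induct) (auto intro: p_integral_add)

lemma p_integral_inverse_of_nat:
  assumes "coprime j p"
  shows "p_integral p (1 / of_nat j)"
proof (cases "j = 0")
  case False
  with assms show ?thesis
    unfolding p_integral_iff by (intro exI[of _ 1] exI[of _ "int j"]) simp
qed simp

lemma p_integral_inverse_4_square:
  assumes "prime p" "odd p" "Suc j < p"
  shows "p_integral p (1 / (4 * (of_nat j + 1)^2))"
proof -
  have "\<not> p dvd Suc j"
    using assms(3) by (auto dest: dvd_imp_le)
  then have "coprime (Suc j) p"
    using prime_imp_coprime[OF assms(1)] coprime_commute by blast
  with \<open>odd p\<close> have "coprime (2^2 * Suc j ^ 2) p"
    by (simp only: coprime_mult_left_iff coprime_power_left_iff) simp
  then show ?thesis
    using p_integral_inverse_of_nat[of "2^2 * Suc j ^ 2" p] by (simp add: add.commute)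
qed

lemma rat_cong_add_multiple: "p_integral p c \<Longrightarrow> rat_cong p (a + of_int m * c) a m"
  unfolding rat_cong_def by (cases "m = 0") simp_all

lemma rat_cong_sum:
  "(\<And>i. i \<in> A \<Longrightarrow> rat_cong p (f i) (g i) m) \<Longrightarrow> rat_cong p (sum f A) (sum g A) m"
  unfolding rat_cong_def
  by (simp add: sum_subtractf[symmetric] sum_divide_distrib p_integral_sum)

lemma rat_cong_mult_left:
  "p_integral p c \<Longrightarrow> rat_cong p a b m \<Longrightarrow> rat_cong p (c * a) (c * b) m"
  unfolding rat_cong_def using p_integral_mult[of p c "(a - b) / of_int m"]
  by (simp add: algebra_simps)

lemma rat_cong_prod:
  assumes "\<And>j. j \<in> A \<Longrightarrow> p_integral p (f j) \<and> p_integral p (g j) \<and> rat_cong p (f j) (g j) m"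
  shows "rat_cong p (prod f A) (prod g A) m"
  using assms
proof (induction A rule: infinite_finite_induct)
  case (insert j A)
  have "p_integral p (prod g A)"
    using insert.prems by (induction A rule: infinite_finite_induct) (auto intro: p_integral_mult)
  then have "p_integral p (f j * ((prod f A - prod g A) / of_int m) + prod g A * ((f j - g j) / of_int m))"
    using insert unfolding rat_cong_def by (intro p_integral_add p_integral_mult) auto
  moreover have "f j * ((prod f A - prod g A) / of_int m) + prod g A * ((f j - g j) / of_int m)
      = (f j * prod f A - g j * prod g A) / of_int m"
    by (simp add: algebra_simps diff_divide_distrib)
  ultimately show ?case
    using insert.hyps unfolding rat_cong_def by simp
qed (simp_all add: rat_cong_def)

section \<open>The coefficients \<open>(x + k choose 2k) (2k choose k)\<close>\<close>

definition binom_pair :: "rat \<Rightarrow> nat \<Rightarrow> rat" where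
  "binom_pair x k = pochhammer (x - of_nat k + 1) (2 * k) / (fact k)\<^sup>2"

lemma binom_pair_0 [simp]: "binom_pair x 0 = 1"
  by (simp add: binom_pair_def)

lemma binom_pair_1_1: "binom_pair 1 (Suc 0) = 2"
  by (simp add: binom_pair_def pochhammer_rec numeral_2_eq_2)

lemma pochhammer_Suc_Suc:
  "pochhammer z (Suc (Suc m)) = z * (z + 1) * pochhammer (z + 2) m"
proof -
  have "z + 1 + 1 = z + 2" by (simp only: add.assoc one_add_one)
  then show ?thesis
    unfolding pochhammer_rec[of z] pochhammer_rec[of "z + 1"] by (simp add: mult.assoc)
qed

lemma pochhammer_Suc_Suc':
  "pochhammer z (Suc (Suc m)) = pochhammer z m * (z + of_nat m) * (z + of_nat m + 1)"
  by (simp add: pochhammer_rec' algebra_simps)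

lemma binom_pair_Suc_of_pochhammer:
  assumes "pochhammer y (2 * Suc k) = c * pochhammer (x - of_nat k + 1) (2 * k)"
  shows "(of_nat k + 1)\<^sup>2 * (pochhammer y (2 * Suc k) / (fact (Suc k))\<^sup>2) = c * binom_pair x k"
proof -
  have "(fact (Suc k) :: rat)\<^sup>2 = (of_nat k + 1)\<^sup>2 * (fact k)\<^sup>2"
    by (simp add: power_mult_distrib add.commute)
  then show ?thesis
    using assms by (simp add: binom_pair_def del: of_nat_Suc)
qed

lemma binom_pair_Suc:
  "(of_nat k + 1)\<^sup>2 * binom_pair x (Suc k) = (x - of_nat k) * (x + of_nat k + 1) * binom_pair x k"
  unfolding binom_pair_def[of x "Suc k"]
proof (rule binom_pair_Suc_of_pochhammer)
  have "pochhammer (x - of_nat k) (Suc (Suc (2 * k)))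
      = (x - of_nat k) * (pochhammer (x - of_nat k + 1) (2 * k) * (x - of_nat k + 1 + of_nat (2 * k)))"
    unfolding pochhammer_rec[of "x - of_nat k"] pochhammer_rec'[of "x - of_nat k + 1"] by simp
  then show "pochhammer (x - of_nat (Suc k) + 1) (2 * Suc k)
      = (x - of_nat k) * (x + of_nat k + 1) * pochhammer (x - of_nat k + 1) (2 * k)"
    by (simp add: algebra_simps)
qed

lemma binom_pair_Suc_up:
  "(of_nat k + 1)\<^sup>2 * binom_pair (x + 1) (Suc k)
     = (x + of_nat k + 1) * (x + of_nat k + 2) * binom_pair x k"
  unfolding binom_pair_def[of "x + 1" "Suc k"]
  by (rule binom_pair_Suc_of_pochhammer)
    (use pochhammer_Suc_Suc'[of "x - of_nat k + 1" "2 * k"] in \<open>simp add: algebra_simps\<close>)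

lemma binom_pair_Suc_down:
  "(of_nat k + 1)\<^sup>2 * binom_pair (x - 1) (Suc k)
     = (x - of_nat k - 1) * (x - of_nat k) * binom_pair x k"
  unfolding binom_pair_def[of "x - 1" "Suc k"]
  by (rule binom_pair_Suc_of_pochhammer)
    (use pochhammer_Suc_Suc[of "x - of_nat k - 1" "2 * k"] in \<open>simp add: algebra_simps\<close>)

lemma binom_pair_eq_0:
  assumes "n < k" shows "binom_pair (of_nat n) k = 0"
proof -
  have "of_nat n - of_nat k + 1 = - (of_nat (k - Suc n) :: rat)"
    using assms by (simp add: of_nat_diff)
  moreover have "k - Suc n < 2 * k"
    using assms by simp
  ultimately have "pochhammer (of_nat n - of_nat k + 1 :: rat) (2 * k) = 0"
    unfolding pochhammer_eq_0_iff by blast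
  then show ?thesis by (simp add: binom_pair_def)
qed

lemma binom_pair_contiguous:
  "(y + 1) * binom_pair (y + 1) (Suc j) + y * binom_pair (y - 1) (Suc j)
     = (2 * y + 1) * (binom_pair y (Suc j) + 2 * binom_pair y j)"
proof -
  define c :: rat where "c = (of_nat j + 1)\<^sup>2"
  have "c \<noteq> 0" unfolding c_def by (simp add: add.commute)
  have "c * ((y + 1) * binom_pair (y + 1) (Suc j) + y * binom_pair (y - 1) (Suc j))
      = (y + 1) * (c * binom_pair (y + 1) (Suc j)) + y * (c * binom_pair (y - 1) (Suc j))"
    by (simp add: algebra_simps)
  also have "\<dots> = ((y + 1) * (y + of_nat j + 1) * (y + of_nat j + 2)
                  + y * (y - of_nat j - 1) * (y - of_nat j)) * binom_pair y j"
    unfolding c_def binom_pair_Suc_up binom_pair_Suc_down by (simp add: algebra_simps)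
  also have "\<dots> = (2 * y + 1) * ((y - of_nat j) * (y + of_nat j + 1) * binom_pair y j
                  + 2 * c * binom_pair y j)"
    unfolding c_def by (simp add: algebra_simps power2_eq_square)
  also have "\<dots> = c * ((2 * y + 1) * (binom_pair y (Suc j) + 2 * binom_pair y j))"
    unfolding c_def binom_pair_Suc[symmetric] by (simp add: algebra_simps)
  finally show ?thesis using \<open>c \<noteq> 0\<close> by simp
qed

lemma binom_pair_difference:
  "(of_nat j + 1) * (binom_pair (y + 1) (Suc j) - binom_pair (y - 1) (Suc j))
     = 2 * (2 * y + 1) * binom_pair y j"
proof -
  define c :: rat where "c = of_nat j + 1"
  have "c \<noteq> 0" unfolding c_def by (simp add: add.commute)
  have "c * (c * (binom_pair (y + 1) (Suc j) - binom_pair (y - 1) (Suc j)))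
      = c\<^sup>2 * binom_pair (y + 1) (Suc j) - c\<^sup>2 * binom_pair (y - 1) (Suc j)"
    by (simp add: algebra_simps power2_eq_square)
  also have "\<dots> = ((y + of_nat j + 1) * (y + of_nat j + 2) - (y - of_nat j - 1) * (y - of_nat j))
                  * binom_pair y j"
    unfolding c_def binom_pair_Suc_up binom_pair_Suc_down by (simp add: algebra_simps)
  also have "\<dots> = c * (2 * (2 * y + 1) * binom_pair y j)"
    unfolding c_def by (simp add: algebra_simps)
  finally show ?thesis using \<open>c \<noteq> 0\<close> unfolding c_def by simp
qed

lemma binom_pair_eq_prod:
  "(-1)^k * binom_pair x k = (\<Prod>j<k. ((2 * of_nat j + 1)^2 - (2 * x + 1)^2) / (4 * (of_nat j + 1)^2))"
proof (induction k)
  case (Suc k)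
  have "- b' = b * (((2 * a + 1)^2 - (2 * x + 1)^2) / (4 * d^2))"
    if "d^2 * b' = (x - a) * (x + a + 1) * b" "d \<noteq> 0" for a b b' d :: rat
  proof -
    have "- b' = - (d^2 * b') / d^2"
      using that(2) by simp
    also have "\<dots> = b * (((2 * a + 1)^2 - (2 * x + 1)^2) / (4 * d^2))"
      unfolding that(1) by (simp add: divide_simps algebra_simps power2_eq_square)
    finally show ?thesis .
  qed
  from this[OF binom_pair_Suc] have step: "- binom_pair x (Suc k)
      = binom_pair x k * (((2 * of_nat k + 1)^2 - (2 * x + 1)^2) / (4 * (of_nat k + 1)^2))"
    by (simp add: add.commute)
  have "(-1)^Suc k * binom_pair x (Suc k) = (-1)^k * (- binom_pair x (Suc k))"
    by simp
  also have "\<dots> = (-1)^k * binom_pair x k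
      * (((2 * of_nat k + 1)^2 - (2 * x + 1)^2) / (4 * (of_nat k + 1)^2))"
    unfolding step by (simp only: mult.assoc)
  finally show ?case
    using Suc.IH by simp
qed simp

section \<open>Central binomial coefficients\<close>

lemma Suc_times_central_binomial_Suc:
  "Suc m * (2 * Suc m choose Suc m) = 2 * (2 * m + 1) * (2 * m choose m)"
proof -
  have a: "(2 * Suc m choose Suc m) * Suc m = Suc (2 * m + 1) * (2 * m + 1 choose m)"
    using Suc_times_binomial_eq[of "2 * m + 1" m] by simp
  have b: "(2 * m + 1 choose m) * Suc m = (2 * m + 1) * (2 * m choose m)"
    using Suc_times_binomial_eq[of "2 * m" m] binomial_symmetric[of "Suc m" "2 * m + 1"] by simp
  have "Suc m * (Suc m * (2 * Suc m choose Suc m)) = Suc (2 * m + 1) * ((2 * m + 1 choose m) * Suc m)"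
    using a by (simp only: ac_simps)
  also have "\<dots> = Suc m * (2 * (2 * m + 1) * (2 * m choose m))"
    unfolding b by simp
  finally show ?thesis by (metis nat_mult_eq_cancel1 zero_less_Suc)
qed

lemma of_nat_central_binomial_Suc:
  "(of_nat m + 1) * of_nat (2 * Suc m choose Suc m) = 2 * (2 * of_nat m + 1) * (of_nat (2 * m choose m) :: rat)"
proof -
  have "rat_of_nat (Suc m * (2 * Suc m choose Suc m)) = of_nat (2 * (2 * m + 1) * (2 * m choose m))"
    by (simp only: Suc_times_central_binomial_Suc)
  then show ?thesis
    by (simp only: of_nat_mult of_nat_Suc of_nat_add of_nat_numeral of_nat_1 ac_simps)
qed

lemma central_binomial_square_eq_prod:
  "of_nat (2 * k choose k)^2 / 16^k = (\<Prod>j<k. (2 * of_nat j + 1)^2 / (4 * (of_nat j + 1)^2) :: rat)"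
proof (induction k)
  case (Suc k)
  define c :: rat where "c = of_nat (2 * k choose k)"
  define c' :: rat where "c' = of_nat (2 * Suc k choose Suc k)"
  have "(of_nat k + 1) * c' = 2 * (2 * of_nat k + 1) * c"
    unfolding c_def c'_def by (rule of_nat_central_binomial_Suc)
  moreover have "c'^2 / (16 * q) = c^2 / q * (e^2 / (4 * d^2))"
    if "d * c' = 2 * e * c" "d \<noteq> 0" "q \<noteq> 0" for d e q :: rat
  proof -
    have "c'^2 / (16 * q) = (d * c')^2 / (16 * q * d^2)"
      using that(2) by (simp add: power_mult_distrib)
    also have "\<dots> = c^2 / q * (e^2 / (4 * d^2))"
      unfolding that(1) by (simp add: power_mult_distrib)
    finally show ?thesis .
  qed
  ultimately have "c'^2 / 16^Suc k = c^2 / 16^k * ((2 * of_nat k + 1)^2 / (4 * (of_nat k + 1)^2))"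
    by (simp add: add.commute)
  with Suc.IH show ?case
    unfolding c_def c'_def by simp
qed simp

lemma of_nat_fact_double_plus_2:
  "(of_nat (fact (2 * m + 2)) :: rat)
     = 2 * (2 * of_nat m + 1) * of_nat (2 * m choose m) * of_nat (fact m) * of_nat (fact (m + 1))"
proof -
  have "fact (2 * m) = fact m * fact m * (2 * m choose m)"
    using binomial_fact_lemma[of m "2 * m"] by (simp add: mult_2)
  then have "fact (2 * m + 2) = 2 * (2 * m + 1) * (2 * m choose m) * fact m * (fact (m + 1) :: nat)"
    by (simp add: algebra_simps)
  then show ?thesis
    by (simp only: of_nat_mult of_nat_add of_nat_numeral of_nat_1)
qed

section \<open>The moments \<open>\<Sum>k\<le>n. k^i A(n, k) (-1/2)^k\<close>\<close>

definition moment :: "nat \<Rightarrow> nat \<Rightarrow> rat" where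
  "moment i n = (\<Sum>k\<le>n. of_nat k ^ i * binom_pair (of_nat n) k * (-1/2)^k)"

lemma moment_eq_sum_upto:
  assumes "n \<le> N"
  shows "moment i n = (\<Sum>k\<le>N. of_nat k ^ i * binom_pair (of_nat n) k * (-1/2)^k)"
  unfolding moment_def
  by (rule sum.mono_neutral_left) (use assms binom_pair_eq_0 in auto)

lemma moment_0_recurrence:
  "(of_nat n + 2) * moment 0 (n + 2) + (of_nat n + 1) * moment 0 n = 0"
proof -
  define y :: rat where "y = of_nat n + 1"
  then have "of_nat (n + 1) = y" by simp
  define g where "g k = binom_pair y k * (-1/2)^k" for k
  have shift: "((y + 1) * binom_pair (y + 1) (Suc k) + y * binom_pair (y - 1) (Suc k)) * (-1/2)^Suc k
      = - (2 * y + 1) * (g k - g (Suc k))" for k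
    unfolding binom_pair_contiguous g_def by (simp add: algebra_simps)
  have "moment 0 n = (\<Sum>k\<le>Suc (n + 1). binom_pair (y - 1) k * (-1/2)^k)"
    using moment_eq_sum_upto[of n "Suc (n + 1)" 0] by (simp add: y_def del: sum.atMost_Suc)
  moreover have "moment 0 (n + 2) = (\<Sum>k\<le>Suc (n + 1). binom_pair (y + 1) k * (-1/2)^k)"
    by (simp add: moment_def y_def del: sum.atMost_Suc)
  ultimately have "(of_nat n + 2) * moment 0 (n + 2) + (of_nat n + 1) * moment 0 n
      = (\<Sum>k\<le>Suc (n + 1). ((y + 1) * binom_pair (y + 1) k + y * binom_pair (y - 1) k) * (-1/2)^k)"
    by (simp add: y_def sum_distrib_left sum.distrib algebra_simps del: sum.atMost_Suc)
  also have "\<dots> = (2 * y + 1) - (2 * y + 1) * (\<Sum>k\<le>n + 1. g k - g (Suc k))"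
    by (simp only: sum.atMost_Suc_shift shift sum_distrib_left[symmetric]) (simp add: algebra_simps)
  also have "\<dots> = 0"
    using binom_pair_eq_0[of "n + 1" "n + 2"] unfolding sum_telescope \<open>of_nat (n + 1) = y\<close>
    by (simp add: g_def)
  finally show ?thesis .
qed

lemma moment_1_recurrence:
  "moment 1 (n + 2) - moment 1 n = - (2 * of_nat n + 3) * moment 0 (n + 1)"
proof -
  define y :: rat where "y = of_nat n + 1"
  then have "of_nat (n + 1) = y" by simp
  have shift: "of_nat (Suc k) * (binom_pair (y + 1) (Suc k) - binom_pair (y - 1) (Suc k)) * (-1/2)^Suc k
      = - (2 * y + 1) * (binom_pair y k * (-1/2)^k)" for k
    using binom_pair_difference[of k y] by (simp add: algebra_simps)
  have "moment 1 n = (\<Sum>k\<le>Suc (n + 1). of_nat k * binom_pair (y - 1) k * (-1/2)^k)"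
    using moment_eq_sum_upto[of n "Suc (n + 1)" 1] by (simp add: y_def del: sum.atMost_Suc)
  moreover have "moment 1 (n + 2) = (\<Sum>k\<le>Suc (n + 1). of_nat k * binom_pair (y + 1) k * (-1/2)^k)"
    by (simp add: moment_def y_def del: sum.atMost_Suc)
  ultimately have "moment 1 (n + 2) - moment 1 n
      = (\<Sum>k\<le>Suc (n + 1). of_nat k * (binom_pair (y + 1) k - binom_pair (y - 1) k) * (-1/2)^k)"
    by (simp add: sum_subtractf[symmetric] algebra_simps del: sum.atMost_Suc)
  also have "\<dots> = - (2 * y + 1) * (\<Sum>k\<le>n + 1. binom_pair y k * (-1/2)^k)"
    by (simp only: sum.atMost_Suc_shift shift sum_distrib_left[symmetric])
  also have "\<dots> = - (2 * of_nat n + 3) * moment 0 (n + 1)"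
    unfolding moment_def \<open>of_nat (n + 1) = y\<close> by (simp add: y_def)
  finally show ?thesis .
qed

lemma moment_2_eq:
  "moment 2 n = moment 1 n - of_nat n * (of_nat n + 1) * moment 0 n"
proof -
  define x :: rat where "x = of_nat n"
  define S where "S i = (\<Sum>k\<le>n. of_nat k ^ i * binom_pair x k * (-1/2)^k)" for i
  have shift: "of_nat (Suc k) ^ 2 * binom_pair x (Suc k) * (-1/2)^Suc k
      = (-1/2) * (x * (x + 1) * (of_nat k ^ 0 * binom_pair x k * (-1/2)^k)
          - of_nat k ^ 1 * binom_pair x k * (-1/2)^k - of_nat k ^ 2 * binom_pair x k * (-1/2)^k)" for k
  proof -
    have "of_nat (Suc k) ^ 2 * binom_pair x (Suc k) * (-1/2)^Suc k
        = (-1/2) * (((of_nat k + 1)\<^sup>2 * binom_pair x (Suc k)) * (-1/2)^k)"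
      by (simp add: add.commute)
    then show ?thesis
      unfolding binom_pair_Suc by (simp add: algebra_simps power2_eq_square)
  qed
  have "moment 2 n = (\<Sum>k\<le>Suc n. of_nat k ^ 2 * binom_pair x k * (-1/2)^k)"
    using moment_eq_sum_upto[of n "Suc n" 2] by (simp add: x_def)
  also have "\<dots> = (-1/2) * (x * (x + 1) * S 0 - S 1 - S 2)"
    unfolding sum.atMost_Suc_shift shift S_def
    by (simp only: sum_distrib_left[symmetric] sum_subtractf) simp
  also have "\<dots> = (-1/2) * (x * (x + 1) * moment 0 n - moment 1 n - moment 2 n)"
    by (simp add: S_def moment_def x_def)
  finally show ?thesis by (simp add: x_def algebra_simps)
qed

lemma moment_0_even_Suc:
  assumes "moment 0 (2 * m) = (-1)^m * of_nat (2 * m choose m) / 4^m"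
  shows "moment 0 (2 * Suc m) = (-1)^Suc m * of_nat (2 * Suc m choose Suc m) / 4^Suc m"
proof -
  define a :: rat where "a = of_nat m"
  define c :: rat where "c = of_nat (2 * m choose m)"
  define c' :: rat where "c' = of_nat (2 * Suc m choose Suc m)"
  have binom: "(a + 1) * c' = 2 * (2 * a + 1) * c"
    unfolding a_def c_def c'_def by (rule of_nat_central_binomial_Suc)
  have "(2 * a + 2) * moment 0 (2 * Suc m) = - (2 * a + 1) * moment 0 (2 * m)"
    using moment_0_recurrence[of "2 * m"] unfolding a_def by (simp add: algebra_simps)
  also have "\<dots> = - (2 * a + 1) * ((-1)^m * c / 4^m)"
    unfolding c_def assms ..
  finally have rec: "(2 * a + 2) * moment 0 (2 * Suc m) = - (2 * a + 1) * ((-1)^m * c / 4^m)" .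
  have "(a + 1) * (4 * 4^m * moment 0 (2 * Suc m)) = 2 * 4^m * ((2 * a + 2) * moment 0 (2 * Suc m))"
    by (simp add: algebra_simps)
  also have "\<dots> = - ((-1)^m) * (2 * (2 * a + 1) * c)"
    unfolding rec by (simp add: field_simps)
  also have "\<dots> = (a + 1) * (- ((-1)^m) * c')"
    unfolding binom[symmetric] by (simp add: algebra_simps)
  finally have "4 * 4^m * moment 0 (2 * Suc m) = - ((-1)^m) * c'"
    by (rule mult_left_cancel[THEN iffD1, rotated]) (simp add: a_def add_nonneg_eq_0_iff)
  then show ?thesis
    unfolding c'_def[symmetric] by (simp add: field_simps)
qed

lemma moment_0_closed_form:
  "moment 0 (2 * m) = (-1)^m * of_nat (2 * m choose m) / 4^m \<and> moment 0 (2 * m + 1) = 0"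
proof (induction m)
  case 0
  show ?case by (simp add: moment_def binom_pair_1_1)
next
  case (Suc m)
  have "(of_nat (2 * m + 1) + 2) * moment 0 (2 * m + 1 + 2) = 0"
    using moment_0_recurrence[of "2 * m + 1"] conjunct2[OF Suc.IH]
    by (simp only: mult_zero_right add_0_right)
  moreover have "(of_nat (2 * m + 1) + 2 :: rat) \<noteq> 0"
    using of_nat_0_le_iff[of "2 * m + 1"] by linarith
  moreover have "2 * m + 1 + 2 = 2 * Suc m + 1" by simp
  ultimately have "moment 0 (2 * Suc m + 1) = 0"
    by simp
  with moment_0_even_Suc[OF conjunct1[OF Suc.IH]] show ?case ..
qed

lemma moment_1_closed_form:
  "moment 1 (2 * m) = 0 \<and> moment 1 (2 * m + 1) = - (2 * of_nat m + 1) * moment 0 (2 * m)"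
proof (induction m)
  case 0
  show ?case by (simp add: moment_def binom_pair_1_1)
next
  case (Suc m)
  have "moment 1 (2 * Suc m) = moment 1 (2 * m) - (4 * of_nat m + 3) * moment 0 (2 * m + 1)"
    using moment_1_recurrence[of "2 * m"] by (simp add: algebra_simps)
  then have even: "moment 1 (2 * Suc m) = 0"
    using Suc.IH moment_0_closed_form[of m] by simp
  have "moment 1 (2 * Suc m + 1) = moment 1 (2 * m + 1) - (4 * of_nat m + 5) * moment 0 (2 * Suc m)"
    using moment_1_recurrence[of "2 * m + 1"] by (simp add: algebra_simps)
  also have "moment 1 (2 * m + 1) = (2 * of_nat m + 2) * moment 0 (2 * Suc m)"
    using conjunct2[OF Suc.IH] moment_0_recurrence[of "2 * m"] by (simp add: algebra_simps)
  finally have odd: "moment 1 (2 * Suc m + 1) = - (2 * of_nat (Suc m) + 1) * moment 0 (2 * Suc m)"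
    by (simp add: algebra_simps)
  from even odd show ?case ..
qed

lemma moment_2_even:
  "moment 2 (2 * m) = - (2 * of_nat m) * (2 * of_nat m + 1) * ((-1)^m * of_nat (2 * m choose m) / 4^m)"
  unfolding moment_2_eq conjunct1[OF moment_1_closed_form] conjunct1[OF moment_0_closed_form]
  by (simp add: field_simps)

lemma moment_2_odd:
  "moment 2 (2 * m + 1) = - (2 * of_nat m + 1) * ((-1)^m * of_nat (2 * m choose m) / 4^m)"
  unfolding moment_2_eq conjunct2[OF moment_1_closed_form] conjunct2[OF moment_0_closed_form]
    conjunct1[OF moment_0_closed_form]
  by simp

lemma moment_2_odd_eq_fact:
  "(-1)^(m + 1) / 2^(2 * m + 1) * (of_nat (fact (2 * m + 2)) / (of_nat (fact m) * of_nat (fact (m + 1))))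
     = moment 2 (2 * m + 1)"
proof -
  define c :: rat where "c = of_nat (2 * m choose m)"
  define f :: rat where "f = of_nat (fact m)"
  define f' :: rat where "f' = of_nat (fact (m + 1))"
  have "f \<noteq> 0" "f' \<noteq> 0"
    unfolding f_def f'_def by (metis fact_nonzero of_nat_eq_0_iff)+
  then have ratio: "of_nat (fact (2 * m + 2)) / (f * f') = 2 * (2 * of_nat m + 1) * c"
    unfolding of_nat_fact_double_plus_2 c_def[symmetric] f_def[symmetric] f'_def[symmetric] by simp
  have "(2::rat)^(2 * m + 1) = 2 * 4^m"
    by (simp add: power_mult)
  then show ?thesis
    unfolding f_def[symmetric] f'_def[symmetric] ratio moment_2_odd c_def[symmetric]
    by (simp add: field_simps)
qed

lemma moment_2_even_eq_fact:
  assumes "0 < m"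
  shows "(-1)^(m + 1) / 2^(2 * m) * (of_nat (fact (2 * m + 2)) / (of_nat (fact (m - 1)) * of_nat (fact (m + 1))))
     = moment 2 (2 * m)"
proof -
  define c :: rat where "c = of_nat (2 * m choose m)"
  define f :: rat where "f = of_nat (fact (m - 1))"
  define f' :: rat where "f' = of_nat (fact (m + 1))"
  have "f \<noteq> 0" "f' \<noteq> 0"
    unfolding f_def f'_def by (metis fact_nonzero of_nat_eq_0_iff)+
  have "of_nat (fact m) = of_nat m * f"
    unfolding f_def of_nat_fact by (rule fact_reduce[OF assms])
  then have ratio: "of_nat (fact (2 * m + 2)) / (f * f') = 2 * of_nat m * (2 * of_nat m + 1) * c"
    unfolding of_nat_fact_double_plus_2 c_def[symmetric] f'_def[symmetric]
    using \<open>f \<noteq> 0\<close> \<open>f' \<noteq> 0\<close> by simp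
  have "(2::rat)^(2 * m) = 4^m"
    by (simp add: power_mult)
  then show ?thesis
    unfolding f_def[symmetric] f'_def[symmetric] ratio moment_2_even c_def[symmetric]
    by (simp add: field_simps)
qed

section \<open>The congruence\<close>

lemma central_binomial_square_cong:
  assumes p: "prime p" "p = 2 * n + 1" and "k \<le> n"
  shows "rat_cong p (of_nat (2 * k choose k)^2 / 16^k) ((-1)^k * binom_pair (of_nat n) k) (int p ^ 2)"
  unfolding central_binomial_square_eq_prod binom_pair_eq_prod
proof (rule rat_cong_prod)
  fix j assume "j \<in> {..<k}"
  define u :: rat where "u = 1 / (4 * (of_nat j + 1)^2)"
  have u: "p_integral p u"
    unfolding u_def using p \<open>j \<in> {..<k}\<close> \<open>k \<le> n\<close> by (intro p_integral_inverse_4_square) auto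
  define v :: int where "v = (2 * int j + 1)^2 - int p ^ 2"
  have "2 * of_nat n + 1 = (of_nat p :: rat)"
    using p(2) by simp
  then have G: "((2 * of_nat j + 1)^2 - (2 * of_nat n + 1)^2) / (4 * (of_nat j + 1)^2) = of_int v * u"
    unfolding u_def v_def by simp
  have F: "(2 * of_nat j + 1)^2 / (4 * (of_nat j + 1)^2) = of_int v * u + of_int (int p ^ 2) * u"
    unfolding u_def v_def by (simp add: field_simps)
  show "p_integral p ((2 * of_nat j + 1)^2 / (4 * (of_nat j + 1)^2))
      \<and> p_integral p (((2 * of_nat j + 1)^2 - (2 * of_nat n + 1)^2) / (4 * (of_nat j + 1)^2))
      \<and> rat_cong p ((2 * of_nat j + 1)^2 / (4 * (of_nat j + 1)^2))
          (((2 * of_nat j + 1)^2 - (2 * of_nat n + 1)^2) / (4 * (of_nat j + 1)^2)) (int p ^ 2)"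
    unfolding F G using u
    by (intro conjI p_integral_add p_integral_mult p_integral_of_int rat_cong_add_multiple)
qed

lemma sum_cong_moment_2:
  assumes "prime p" "p = 2 * n + 1"
  shows "rat_cong p (\<Sum>k=0..n. of_nat (k^2 * (2*k choose k)^2) / 32^k) (moment 2 n) (int p ^ 2)"
proof -
  have "(32::rat)^k = 2^k * 16^k" for k
    by (simp flip: power_mult_distrib)
  then have sum_eq: "(\<Sum>k=0..n. of_nat (k^2 * (2*k choose k)^2) / 32^k)
      = (\<Sum>k\<le>n. of_nat k ^ 2 / 2^k * (of_nat (2 * k choose k)^2 / 16^k) :: rat)"
    by (intro sum.cong) (auto simp: atLeast0AtMost power_mult_distrib)
  have "(- (1 / 2) :: rat) ^ k = (-1)^k / 2^k" for k
    by (simp flip: power_divide)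
  then have moment_eq: "moment 2 n = (\<Sum>k\<le>n. of_nat k ^ 2 / 2^k * ((-1)^k * binom_pair (of_nat n) k))"
    unfolding moment_def by (intro sum.cong) simp_all
  have "p_integral p (of_nat k ^ 2 / 2^k)" for k
  proof -
    have "coprime (2 ^ k) p"
      using assms(2) by simp
    from p_integral_mult[OF p_integral_of_nat[of p "k^2"] p_integral_inverse_of_nat[OF this]]
    show ?thesis by simp
  qed
  then show ?thesis
    unfolding sum_eq moment_eq
    by (intro rat_cong_sum rat_cong_mult_left central_binomial_square_cong[OF assms]) auto
qed

lemma fact_quotient_eq_moment_2_1_mod_4:
  assumes "prime p" "p mod 4 = 1"
  shows "(-1)^((p + 3) div 4) / 2^((p - 1) div 2) *
           (of_nat (fact ((p + 3) div 2)) / (of_nat (fact ((p - 5) div 4)) * of_nat (fact ((p + 3) div 4))))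
         = moment 2 ((p - 1) div 2)"
proof -
  define m where "m = p div 4"
  have p: "p = 4 * m + 1"
    using assms(2) div_mult_mod_eq[of p 4] unfolding m_def by linarith
  with assms(1) have "0 < m"
    by (metis add_0 gr0I mult_0_right not_prime_1)
  have idx: "(p - 1) div 2 = 2 * m" "(p + 3) div 4 = m + 1" "(p + 3) div 2 = 2 * m + 2"
    "(p - 5) div 4 = m - 1"
    using p by auto
  show ?thesis
    unfolding idx by (rule moment_2_even_eq_fact[OF \<open>0 < m\<close>])
qed

lemma fact_quotient_eq_moment_2_3_mod_4:
  assumes "p mod 4 = 3"
  shows "(-1)^((p + 1) div 4) / 2^((p - 1) div 2) *
           (of_nat (fact ((p + 1) div 2)) / (of_nat (fact ((p - 3) div 4)) * of_nat (fact ((p + 1) div 4))))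
         = moment 2 ((p - 1) div 2)"
proof -
  define m where "m = p div 4"
  have p: "p = 4 * m + 3"
    using assms div_mult_mod_eq[of p 4] unfolding m_def by linarith
  have idx: "(p - 1) div 2 = 2 * m + 1" "(p + 1) div 4 = m + 1" "(p + 1) div 2 = 2 * m + 2"
    "(p - 3) div 4 = m"
    using p by auto
  show ?thesis
    unfolding idx by (rule moment_2_odd_eq_fact)
qed

theorem corollary2p1:
  fixes p :: nat
  assumes "prime p" and "odd p"
  shows "(p mod 4 = 1 \<longrightarrow>
           rat_cong p (\<Sum>k=0..(p - 1) div 2. of_nat (k^2 * (2*k choose k)^2) / 32^k)
             ((-1)^((p + 3) div 4) / 2^((p - 1) div 2) *
              (of_nat (fact ((p + 3) div 2)) /
               (of_nat (fact ((p - 5) div 4)) * of_nat (fact ((p + 3) div 4)))))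
             (int p^2))
       \<and> (p mod 4 = 3 \<longrightarrow>
           rat_cong p (\<Sum>k=0..(p - 1) div 2. of_nat (k^2 * (2*k choose k)^2) / 32^k)
             ((-1)^((p + 1) div 4) / 2^((p - 1) div 2) *
              (of_nat (fact ((p + 1) div 2)) /
               (of_nat (fact ((p - 3) div 4)) * of_nat (fact ((p + 1) div 4)))))
             (int p^2))"
proof -
  have "p = 2 * ((p - 1) div 2) + 1"
    using \<open>odd p\<close> by presburger
  note cong = sum_cong_moment_2[OF assms(1) this]
  show ?thesis
    by (intro conjI impI) (simp_all only: cong fact_quotient_eq_moment_2_1_mod_4[OF assms(1)]
        fact_quotient_eq_moment_2_3_mod_4)
qed

end
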